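(* Let $\alpha>0$ and let $X_\alpha:\mathbb{C}\cong\mathbb{R}^2\to\mathrm{Nil}_3$ be the map defined in the context (with $\theta=\tilde\theta_\alpha$). Then $X_\alpha$ is simply periodic: there exists $Z\in\mathbb{C}\setminus\{0\}$ such that $X_\alpha(z+Z)=X_\alpha(z)$ for all $z\in\mathbb{C}$.
   Context: $\mathrm{Nil}_3$ is $\mathbb{R}^3$ with the metric $dx_1^2+dx_2^2+\big(dx_3+\tfrac12(x_2dx_1-x_1dx_2)\big)^2$. For $\alpha>0$ and $\theta\in\mathbb{R}$ set $C_{\alpha,\theta}=\frac{\sin(2\theta)}{2\alpha}$ and $P_{\alpha,\theta}(x)=\alpha^2+\cos(2\theta)x^2-C_{\alpha,\theta}^2x^4$. Let $\theta^+_\alpha=\pi/2$ if $\alpha>1$, and $\theta^+_\alpha=\frac12\arccos(1-2\alpha^2)$ if $\alpha\le1$. Let $$L(\alpha,\theta)=\int_{-1}^1\frac{2\alpha C_{\alpha,\theta}^2x^2-\alpha\cos(2\theta)+C_{\alpha,\theta}^2x^2\sqrt{P_{\alpha,\theta}(x)}}{\sqrt{(1-x^2)P_{\alpha,\theta}(x)}(\alpha+\sqrt{P_{\alpha,\theta}(x)})}dx.$$ Let $\theta=\tilde\theta_\alpha$ be the unique $\theta\in(0,\theta^+_\alpha)\cap(0,\pi/4)$ with $L(\alpha,\theta)=0$, and $C=C_{\alpha,\theta}$. Let $\varphi$ solve $\varphi'^2=P_{\alpha,\theta}(\cos\varphi)$ with $\varphi(0)=0$ and $\varphi'(0)\le0$.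 Define $\beta'=C\cos^2\varphi$ with $\beta(0)=0$, and $G'=\frac{C^2\cos^2\varphi-\cos 2\theta}{\alpha-\varphi'}$ with $G(0)=0$. Put $A=\alpha v+\beta(u)$. Then $X_\alpha(u+iv)=(x_1,x_2,x_3)$ with $x_1=\frac{G'}{\alpha}\cos\varphi\sinh A-\frac C\alpha\sin\varphi\cosh A$, $x_2=Cv-G$, $x_3=-\frac{x_1x_2}2+\frac C\alpha(\frac{G'}{\alpha}-1)\cos\varphi\cosh A-\frac1\alpha(\frac{C^2}\alpha+G')\sin\varphi\sinh A$, where $\varphi,G,G'$ are evaluated at $u$. *)

theory Defs
  imports "HOL-Analysis.Analysis"
begin

definition Cc :: "real \<Rightarrow> real \<Rightarrow> real" where
  "Cc \<alpha> \<theta> = sin (2 * \<theta>) / (2 * \<alpha>)"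

definition Pp :: "real \<Rightarrow> real \<Rightarrow> real \<Rightarrow> real" where
  "Pp \<alpha> \<theta> x = \<alpha>^2 + cos (2 * \<theta>) * x^2 - (Cc \<alpha> \<theta>)^2 * x^4"

definition theta_plus :: "real \<Rightarrow> real" where
  "theta_plus \<alpha> = (if \<alpha> > 1 then pi / 2 else arccos (1 - 2 * \<alpha>^2) / 2)"

definition Lfun :: "real \<Rightarrow> real \<Rightarrow> real" where
  "Lfun \<alpha> \<theta> = integral {-1..1} (\<lambda>x.
     (2 * \<alpha> * (Cc \<alpha> \<theta>)^2 * x^2 - \<alpha> * cos (2 * \<theta>)
       + (Cc \<alpha> \<theta>)^2 * x^2 * sqrt (Pp \<alpha> \<theta> x))
     / (sqrt ((1 - x^2) * Pp \<alpha> \<theta> x) * (\<alpha> + sqrt (Pp \<alpha> \<theta> x))))"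

definition Gprime :: "real \<Rightarrow> real \<Rightarrow> (real \<Rightarrow> real) \<Rightarrow> (real \<Rightarrow> real) \<Rightarrow> real \<Rightarrow> real" where
  "Gprime \<alpha> \<theta> \<phi> \<phi>' u =
     ((Cc \<alpha> \<theta>)^2 * (cos (\<phi> u))^2 - cos (2 * \<theta>)) / (\<alpha> - \<phi>' u)"

definition Xmap :: "real \<Rightarrow> real \<Rightarrow> (real \<Rightarrow> real) \<Rightarrow> (real \<Rightarrow> real) \<Rightarrow> (real \<Rightarrow> real)
     \<Rightarrow> (real \<Rightarrow> real) \<Rightarrow> complex \<Rightarrow> real \<times> real \<times> real" where
  "Xmap \<alpha> \<theta> \<phi> \<phi>' \<beta> G z =
    (let u = Re z; v = Im z; C = Cc \<alpha> \<theta>; Gp = Gprime \<alpha> \<theta> \<phi> \<phi>' u;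
         A = \<alpha> * v + \<beta> u;
         x1 = Gp / \<alpha> * cos (\<phi> u) * sinh A - C / \<alpha> * sin (\<phi> u) * cosh A;
         x2 = C * v - G u;
         x3 = - (x1 * x2) / 2 + C / \<alpha> * (Gp / \<alpha> - 1) * cos (\<phi> u) * cosh A
              - 1 / \<alpha> * (C^2 / \<alpha> + Gp) * sin (\<phi> u) * sinh A
     in (x1, x2, x3))"

end

theory Submission
  imports Defs
begin

text \<open>Since P(cos \<phi>) > 0, the derivative \<phi>' never vanishes, and \<phi>'(0) \<le> 0 forces
  \<phi>' = -sqrt(P(cos \<phi>)) everywhere. So \<phi> solves an autonomous equation with positive
  2\<pi>-periodic speed, whence \<phi>(u + T) = \<phi>(u) - 2\<pi> for T the integral of
  1 / sqrt(P(cos y)) over [0, 2\<pi>]. Over one such period \<beta> and G change by constants B and D, integrals over a full turn of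
  \<phi>; the substitution x = cos y turns C B + \<alpha> D into -2 L(\<alpha>, \<theta>), which vanishes.
  Hence z \<mapsto> z + T + i B / \<alpha> preserves \<phi>, \<phi>', A = \<alpha> v + \<beta>(u) and x2 = C v - G,
  and with them X.\<close>

lemma DERIV_nonzero_imp_inj:
  fixes f f' :: "real \<Rightarrow> real"
  assumes der: "\<And>x. (f has_real_derivative f' x) (at x)" and nz: "\<And>x. f' x \<noteq> 0"
  shows "inj f"
proof (rule linorder_injI)
  fix a b :: real
  assume "a < b"
  have "continuous_on {a..b} f"
    by (meson DERIV_continuous continuous_at_imp_continuous_on der)
  moreover have "f differentiable (at x)" for x
    using der real_differentiable_def by blast
  ultimately show "f a \<noteq> f b"
    using Rolle[OF \<open>a < b\<close>] der nz DERIV_unique by metis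
qed

(* f' need not be continuous: its sign is carried by the monotonicity of the injective f. *)
lemma DERIV_nonzero_sign_const:
  fixes f f' :: "real \<Rightarrow> real"
  assumes der: "\<And>x. (f has_real_derivative f' x) (at x)" and nz: "\<And>x. f' x \<noteq> 0"
    and "f' a < 0"
  shows "f' b < 0"
proof -
  have "continuous_on UNIV f"
    by (meson DERIV_continuous continuous_at_imp_continuous_on der)
  then have mono: "strict_mono_on UNIV f \<or> strict_antimono_on UNIV f"
    using injective_eq_monotone_map[of UNIV f] DERIV_nonzero_imp_inj[OF der nz] by simp
  show ?thesis
  proof (rule ccontr)
    assume "\<not> f' b < 0"
    with nz have "f' b > 0" by (meson linorder_neqE_linordered_idom)
    from mono show False
    proof
      assume "strict_mono_on UNIV f"
      obtain d where "d > 0" and "\<And>h. 0 < h \<Longrightarrow> h < d \<Longrightarrow> f (a + h) < f a"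
        using DERIV_neg_dec_right[OF der \<open>f' a < 0\<close>] by blast
      then have "f (a + d/2) < f a"
        by simp
      moreover have "f a < f (a + d/2)"
        using \<open>strict_mono_on UNIV f\<close> \<open>d > 0\<close> by (simp add: monotone_on_def)
      ultimately show False
        by simp
    next
      assume "strict_antimono_on UNIV f"
      obtain d where "d > 0" and "\<And>h. 0 < h \<Longrightarrow> h < d \<Longrightarrow> f b < f (b + h)"
        using DERIV_pos_inc_right[OF der \<open>f' b > 0\<close>] by blast
      then have "f b < f (b + d/2)"
        by simp
      moreover have "f (b + d/2) < f b"
        using \<open>strict_antimono_on UNIV f\<close> \<open>d > 0\<close> by (simp add: monotone_on_def)
      ultimately show False
        by simp
    qed
  qed
qed

lemma DERIV_neg_sqrt_of_square:
  fixes \<phi> \<phi>' g :: "real \<Rightarrow> real"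
  assumes \<phi>: "\<And>u. (\<phi> has_real_derivative \<phi>' u) (at u)"
    and sq: "\<And>u. (\<phi>' u)^2 = g (\<phi> u)" and g_pos: "\<And>y. g y > 0" and "\<phi>' 0 \<le> 0"
  shows "\<phi>' u = - sqrt (g (\<phi> u))"
proof -
  have nz: "\<phi>' v \<noteq> 0" for v
    using sq[of v] g_pos[of "\<phi> v"] by auto
  then have "\<phi>' u < 0"
    using DERIV_nonzero_sign_const[OF \<phi> nz] \<open>\<phi>' 0 \<le> 0\<close> by (meson order.not_eq_order_implies_strict)
  moreover have "sqrt (g (\<phi> u)) = \<bar>\<phi>' u\<bar>"
    using sq[of u] by (metis real_sqrt_abs)
  ultimately show ?thesis
    by simp
qed

lemma continuous_imp_antiderivative:
  fixes h :: "real \<Rightarrow> real"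
  assumes "continuous_on UNIV h"
  obtains I where "\<And>y. (I has_real_derivative h y) (at y)"
  using einterval_antiderivative[of "-\<infinity>" "\<infinity>" h] assms
  by (auto simp: has_real_derivative_iff_has_vector_derivative continuous_on_eq_continuous_at)

lemma DERIV_periodic_increment:
  fixes I h :: "real \<Rightarrow> real"
  assumes I: "\<And>y. (I has_real_derivative h y) (at y)" and h_per: "\<And>y. h (y + p) = h y"
  shows "I (y + p) - I y = I p - I 0"
proof -
  have "((\<lambda>y. I (y + p) - I y) has_real_derivative 0) (at x)" for x
  proof -
    have "((\<lambda>y. I (y + p)) has_real_derivative h (x + p)) (at x)"
      using I[of "x + p"] DERIV_shift by blast
    then show ?thesis
      using h_per I by (auto intro!: derivative_eq_intros)
  qed
  from DERIV_isconst_all[OF allI[OF this], of y 0] show ?thesis by simp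
qed

(* For Q' = 1/s, Q \<circ> \<phi> decreases at unit speed while Q gains the same T over every period of s. *)
lemma autonomous_ODE_shift:
  fixes \<phi> s :: "real \<Rightarrow> real"
  assumes \<phi>: "\<And>u. (\<phi> has_real_derivative - s (\<phi> u)) (at u)"
    and s_cont: "continuous_on UNIV s" and s_pos: "\<And>y. s y > 0"
    and s_per: "\<And>y. s (y + p) = s y" and "p > 0"
  obtains T where "T > 0" "\<And>u. \<phi> (u + T) = \<phi> u - p"
proof -
  have "continuous_on UNIV (\<lambda>y. 1 / s y)"
    using s_cont s_pos by (intro continuous_intros) (auto simp: less_imp_neq[symmetric])
  then obtain Q where Q: "\<And>y. (Q has_real_derivative 1 / s y) (at y)"
    using continuous_imp_antiderivative by blast
  have Q_mono: "strict_mono Q"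
  proof (rule strict_monoI)
    fix x y :: real
    assume "x < y"
    then show "Q x < Q y"
    proof (rule DERIV_pos_imp_increasing)
      fix t
      show "\<exists>l. (Q has_real_derivative l) (at t) \<and> l > 0"
        using Q[of t] s_pos[of t] by (intro exI[of _ "1 / s t"]) simp
    qed
  qed
  have "((\<lambda>u. Q (\<phi> u) + u) has_real_derivative 0) (at x)" for x
  proof -
    have "((\<lambda>u. Q (\<phi> u)) has_real_derivative 1 / s (\<phi> x) * - s (\<phi> x)) (at x)"
      by (rule DERIV_chain2[OF Q \<phi>])
    then show ?thesis
      using s_pos[of "\<phi> x"] by (auto intro!: derivative_eq_intros)
  qed
  from DERIV_isconst_all[OF allI[OF this]]
  have Q_\<phi>: "Q (\<phi> u) + u = Q (\<phi> 0)" for u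
    by (metis add_0_right)
  define T where "T = Q p - Q 0"
  have Q_shift: "Q (y + p) = Q y + T" for y
    using DERIV_periodic_increment[OF Q, of p y] s_per by (simp add: T_def)
  show ?thesis
  proof
    show "T > 0"
      using Q_mono \<open>p > 0\<close> by (simp add: T_def strict_mono_less)
    fix u
    have "Q (\<phi> (u + T)) = Q (\<phi> u - p)"
      using Q_\<phi>[of "u + T"] Q_\<phi>[of u] Q_shift[of "\<phi> u - p"] by simp
    then show "\<phi> (u + T) = \<phi> u - p"
      using strict_mono_eq[OF Q_mono] by simp
  qed
qed

lemma DERIV_comp_periodic_increment:
  fixes \<phi> \<phi>' w h :: "real \<Rightarrow> real"
  assumes \<phi>: "\<And>u. (\<phi> has_real_derivative \<phi>' u) (at u)"
    and \<phi>_shift: "\<And>u. \<phi> (u + T) = \<phi> u - p" and "p \<ge> 0"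
    and h_cont: "continuous_on UNIV h" and h_per: "\<And>y. h (y + p) = h y"
    and w: "\<And>u. (w has_real_derivative h (\<phi> u) * \<phi>' u) (at u)"
  shows "w (u + T) = w u - integral {0..p} h"
proof -
  obtain I where I: "\<And>y. (I has_real_derivative h y) (at y)"
    using continuous_imp_antiderivative[OF h_cont] by blast
  have "(h has_integral (I p - I 0)) {0..p}"
    using \<open>p \<ge> 0\<close> I by (intro fundamental_theorem_of_calculus)
      (auto simp: has_real_derivative_iff_has_vector_derivative intro: has_vector_derivative_at_within)
  then have int_h: "integral {0..p} h = I p - I 0"
    by (rule integral_unique)
  have "((\<lambda>u. w u - I (\<phi> u)) has_real_derivative 0) (at x)" for x
    using DERIV_diff[OF w DERIV_chain2[OF I \<phi>]] by simp
  then have "w (u + T) - I (\<phi> (u + T)) = w u - I (\<phi> u)"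
    using DERIV_isconst_all by blast
  moreover have "I (\<phi> u) - I (\<phi> (u + T)) = I p - I 0"
    using DERIV_periodic_increment[OF I h_per, of "\<phi> u - p"] \<phi>_shift by simp
  ultimately show ?thesis
    using int_h by linarith
qed

lemma has_integral_cos_substitution:
  fixes K f :: "real \<Rightarrow> real"
  assumes K_cont: "continuous_on {a..b} K" and inj: "inj_on cos {a<..<b}"
    and img: "cos ` {a<..<b} = {-1<..<1}"
    and K_eq: "\<And>t. t \<in> {a<..<b} \<Longrightarrow> K t = \<bar>sin t\<bar> * f (cos t)"
  shows "(K has_integral integral {-1..1} f) {a..b}"
proof -
  have "K absolutely_integrable_on {a<..<b}"
    using absolutely_integrable_continuous_real[OF K_cont]
      absolutely_integrable_on_open_interval[where f=K and a=a and b=b]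
    unfolding box_real by blast
  moreover have "integral {a<..<b} (\<lambda>t. \<bar>- sin t\<bar> * f (cos t)) = integral {a<..<b} K"
    by (rule integral_cong) (simp add: K_eq)
  moreover have "(\<lambda>t. \<bar>- sin t\<bar> * f (cos t)) absolutely_integrable_on {a<..<b}
      \<longleftrightarrow> K absolutely_integrable_on {a<..<b}"
    by (rule absolutely_integrable_spike_eq[where S="{}"]) (auto simp: K_eq)
  moreover have "(cos has_real_derivative - sin t) (at t within {a<..<b})" for t
    by (auto intro!: derivative_eq_intros)
  ultimately have "integral (cos ` {a<..<b}) f = integral {a<..<b} K"
    using has_absolute_integral_change_of_variables_1'[of "{a<..<b}" cos "\<lambda>t. - sin t", OF _ _ inj]
    by auto
  then have "integral {a..b} K = integral {-1..1} f"
    by (simp add: img integral_open_interval_real)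
  then show ?thesis
    using integrable_continuous_real[OF K_cont] by (metis has_integral_integrable_integral)
qed

lemma cos_image_0_pi: "cos ` {0<..<pi} = {-1<..<1}"
proof
  show "cos ` {0<..<pi} \<subseteq> {-1<..<1}"
  proof
    fix y assume "y \<in> cos ` {0<..<pi}"
    then obtain t where "0 < t" "t < pi" "y = cos t" by auto
    then show "y \<in> {-1<..<1}"
      using cos_monotone_0_pi[of 0 t] cos_monotone_0_pi[of t pi] by auto
  qed
  show "{-1<..<1} \<subseteq> cos ` {0<..<pi}"
  proof
    fix y :: real assume y: "y \<in> {-1<..<1}"
    then have "-1 \<le> y" "y \<le> 1" by auto
    then have "arccos y \<in> {0<..<pi}"
      using y arccos_lt_bounded[of y] by auto
    then show "y \<in> cos ` {0<..<pi}"
      using cos_arccos[of y] \<open>-1 \<le> y\<close> \<open>y \<le> 1\<close> by (metis image_eqI)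
  qed
qed

lemma inj_on_cos_0_pi: "inj_on cos {0<..<pi}"
  unfolding inj_on_def by (metis cos_inj_pi greaterThanLessThan_iff less_eq_real_def)

lemma greaterThanLessThan_pi_2pi_eq_reflect: "{pi<..<2*pi} = (\<lambda>t. 2*pi - t) ` {0<..<pi}"
proof
  show "{pi<..<2*pi} \<subseteq> (\<lambda>t. 2*pi - t) ` {0<..<pi}"
  proof
    fix x assume "x \<in> {pi<..<2*pi}"
    then show "x \<in> (\<lambda>t. 2*pi - t) ` {0<..<pi}"
      by (intro image_eqI[of _ _ "2*pi - x"]) auto
  qed
qed auto

lemma cos_image_pi_2pi: "cos ` {pi<..<2*pi} = {-1<..<1}"
  by (simp add: greaterThanLessThan_pi_2pi_eq_reflect image_image cos_diff cos_image_0_pi)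

lemma inj_on_cos_pi_2pi: "inj_on cos {pi<..<2*pi}"
  unfolding greaterThanLessThan_pi_2pi_eq_reflect
  by (rule inj_on_imageI) (simp add: comp_def cos_diff inj_on_cos_0_pi)

lemma has_integral_abs_sin_mult_cos:
  fixes K f :: "real \<Rightarrow> real"
  assumes K_cont: "continuous_on {0..2*pi} K"
    and K_eq: "\<And>t. sin t \<noteq> 0 \<Longrightarrow> K t = \<bar>sin t\<bar> * f (cos t)"
  shows "(K has_integral 2 * integral {-1..1} f) {0..2*pi}"
proof -
  have sin_nz: "sin t \<noteq> 0" if "t \<in> {0<..<pi} \<union> {pi<..<2*pi}" for t
    using that sin_gt_zero[of t] sin_gt_zero[of "t - pi"] by (auto simp: sin_diff)
  have "(K has_integral integral {-1..1} f) {0..pi}"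
    using sin_nz
    by (intro has_integral_cos_substitution inj_on_cos_0_pi cos_image_0_pi K_eq
        continuous_on_subset[OF K_cont]) auto
  moreover have "(K has_integral integral {-1..1} f) {pi..2*pi}"
    using sin_nz
    by (intro has_integral_cos_substitution inj_on_cos_pi_2pi cos_image_pi_2pi K_eq
        continuous_on_subset[OF K_cont]) auto
  ultimately have "(K has_integral integral {-1..1} f + integral {-1..1} f) {0..2*pi}"
    by (rule has_integral_combine[rotated 2]) auto
  then show ?thesis
    by (simp only: mult_2)
qed

lemma Pp_pos:
  assumes "\<alpha> > 0" and "0 < \<theta>" and "\<theta> < theta_plus \<alpha>" and "\<theta> < pi / 4" and "\<bar>x\<bar> \<le> 1"
  shows "Pp \<alpha> \<theta> x > 0"
proof -
  define c where "c = cos (2 * \<theta>)"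
  define C where "C = Cc \<alpha> \<theta>"
  have "c > 0"
    unfolding c_def using assms by (intro cos_gt_zero_pi) auto
  have "2 * \<alpha>^2 + c > 1"  \<comment> \<open>this is what \<theta> < theta_plus \<alpha> encodes\<close>
  proof (cases "\<alpha> > 1")
    case True
    then have "\<alpha>^2 > 1"
      by (simp add: one_less_power)
    then show ?thesis
      using \<open>c > 0\<close> by linarith
  next
    case False
    then have bounds: "-1 \<le> 1 - 2 * \<alpha>^2" "1 - 2 * \<alpha>^2 \<le> 1"
      using \<open>\<alpha> > 0\<close> by (auto simp: power_le_one)
    have "cos (arccos (1 - 2 * \<alpha>^2)) < cos (2 * \<theta>)"
      using assms False arccos_ubound[OF bounds]
      by (intro cos_monotone_0_pi) (auto simp: theta_plus_def)
    then show ?thesis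
      using cos_arccos[OF bounds] unfolding c_def by linarith
  qed
  have "4 * \<alpha>^2 * C^2 = 1 - c^2"
    using \<open>\<alpha> > 0\<close> sin_squared_eq[of "2 * \<theta>"]
    by (simp add: C_def c_def Cc_def power_divide power_mult_distrib)
  then have "4 * \<alpha>^2 * (\<alpha>^2 + c - C^2) = (2 * \<alpha>^2 + c)^2 - 1"
    by (simp add: algebra_simps power2_eq_square)
  moreover have "(2 * \<alpha>^2 + c)^2 > 1"
    using \<open>2 * \<alpha>^2 + c > 1\<close> by (simp add: one_less_power)
  ultimately have "4 * \<alpha>^2 * (\<alpha>^2 + c - C^2) > 0"
    by simp
  then have top: "\<alpha>^2 + c - C^2 > 0"
    using \<open>\<alpha> > 0\<close> by (simp add: zero_less_mult_iff)
  define t where "t = x^2"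
  have "0 \<le> t" "t \<le> 1"
    using assms by (auto simp: t_def abs_square_le_1)
  then have "t^2 \<le> t"
    by (simp add: power2_eq_square mult_left_le_one_le)
  then have "C^2 * t^2 \<le> C^2 * t"
    by (simp add: mult_left_mono)
  then have "Pp \<alpha> \<theta> x \<ge> \<alpha>^2 + (c - C^2) * t"
    by (simp add: Pp_def c_def C_def t_def algebra_simps flip: power_mult)
  moreover have "(c - C^2) * t \<ge> min 0 (c - C^2)"
    using \<open>0 \<le> t\<close> \<open>t \<le> 1\<close> by (cases "c - C^2 \<ge> 0") (auto simp: mult_le_cancel_left1)
  ultimately show ?thesis
    using top \<open>\<alpha> > 0\<close> by (smt (verit) zero_less_power)
qed

definition sqrtPcos :: "real \<Rightarrow> real \<Rightarrow> real \<Rightarrow> real" where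
  "sqrtPcos \<alpha> \<theta> y = sqrt (Pp \<alpha> \<theta> (cos y))"

(* Once \<phi>' = - sqrtPcos (\<phi>), the hypotheses read \<beta>' = beta_density (\<phi>) \<phi>' and G' = G_density (\<phi>) \<phi>'. *)
definition beta_density :: "real \<Rightarrow> real \<Rightarrow> real \<Rightarrow> real" where
  "beta_density \<alpha> \<theta> y = - Cc \<alpha> \<theta> * (cos y)^2 / sqrtPcos \<alpha> \<theta> y"

definition G_density :: "real \<Rightarrow> real \<Rightarrow> real \<Rightarrow> real" where
  "G_density \<alpha> \<theta> y = - ((Cc \<alpha> \<theta>)^2 * (cos y)^2 - cos (2 * \<theta>))
     / ((\<alpha> + sqrtPcos \<alpha> \<theta> y) * sqrtPcos \<alpha> \<theta> y)"

definition Lintegrand :: "real \<Rightarrow> real \<Rightarrow> real \<Rightarrow> real" where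
  "Lintegrand \<alpha> \<theta> x =
     (2 * \<alpha> * (Cc \<alpha> \<theta>)^2 * x^2 - \<alpha> * cos (2 * \<theta>)
       + (Cc \<alpha> \<theta>)^2 * x^2 * sqrt (Pp \<alpha> \<theta> x))
     / (sqrt ((1 - x^2) * Pp \<alpha> \<theta> x) * (\<alpha> + sqrt (Pp \<alpha> \<theta> x)))"

lemma Lfun_eq_integral_Lintegrand: "Lfun \<alpha> \<theta> = integral {-1..1} (Lintegrand \<alpha> \<theta>)"
  by (simp add: Lfun_def Lintegrand_def[abs_def])

lemma continuous_on_sqrtPcos: "continuous_on UNIV (sqrtPcos \<alpha> \<theta>)"
  unfolding sqrtPcos_def[abs_def] Pp_def by (intro continuous_intros)

lemma sqrtPcos_periodic: "sqrtPcos \<alpha> \<theta> (y + 2*pi) = sqrtPcos \<alpha> \<theta> y"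
  by (simp add: sqrtPcos_def)

lemma beta_density_periodic: "beta_density \<alpha> \<theta> (y + 2*pi) = beta_density \<alpha> \<theta> y"
  by (simp add: beta_density_def sqrtPcos_def)

lemma G_density_periodic: "G_density \<alpha> \<theta> (y + 2*pi) = G_density \<alpha> \<theta> y"
  by (simp add: G_density_def sqrtPcos_def)

context
  fixes \<alpha> \<theta> :: real
  assumes \<alpha>_pos: "\<alpha> > 0" and Pp_cos_pos: "\<And>y. Pp \<alpha> \<theta> (cos y) > 0"
begin

lemma sqrtPcos_pos: "sqrtPcos \<alpha> \<theta> y > 0"
  using Pp_cos_pos by (simp add: sqrtPcos_def)

lemma continuous_on_beta_density: "continuous_on UNIV (beta_density \<alpha> \<theta>)"
  unfolding beta_density_def[abs_def]
  using continuous_on_sqrtPcos sqrtPcos_pos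
  by (intro continuous_intros) (auto simp: less_imp_neq[symmetric])

lemma continuous_on_G_density: "continuous_on UNIV (G_density \<alpha> \<theta>)"
proof -
  have "(\<alpha> + sqrtPcos \<alpha> \<theta> y) * sqrtPcos \<alpha> \<theta> y \<noteq> 0" for y
    using \<alpha>_pos sqrtPcos_pos[of y] by (simp add: add_pos_pos)
  then show ?thesis
    unfolding G_density_def[abs_def]
    using continuous_on_sqrtPcos by (intro continuous_intros) auto
qed

lemma beta_density_mult_neg_sqrtPcos:
  "beta_density \<alpha> \<theta> y * - sqrtPcos \<alpha> \<theta> y = Cc \<alpha> \<theta> * (cos y)^2"
  using sqrtPcos_pos[of y] by (simp add: beta_density_def)

lemma G_density_mult_neg_sqrtPcos:
  "G_density \<alpha> \<theta> y * - sqrtPcos \<alpha> \<theta> y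
     = ((Cc \<alpha> \<theta>)^2 * (cos y)^2 - cos (2 * \<theta>)) / (\<alpha> + sqrtPcos \<alpha> \<theta> y)"
  using sqrtPcos_pos[of y] by (simp add: G_density_def minus_divide_left)

lemma density_combination_eq_Lintegrand:
  assumes "sin y \<noteq> 0"
  shows "- (Cc \<alpha> \<theta> * beta_density \<alpha> \<theta> y + \<alpha> * G_density \<alpha> \<theta> y)
         = \<bar>sin y\<bar> * Lintegrand \<alpha> \<theta> (cos y)"
proof -
  define S where "S = sqrtPcos \<alpha> \<theta> y"
  define C where "C = Cc \<alpha> \<theta>"
  define c where "c = cos (2 * \<theta>)"
  define x where "x = cos y"
  define N where "N = 2 * \<alpha> * C^2 * x^2 - \<alpha> * c + C^2 * x^2 * S"
  have "S > 0"
    using sqrtPcos_pos by (simp add: S_def)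
  have "\<bar>sin y\<bar> > 0" using \<open>sin y \<noteq> 0\<close> by simp
  have "sqrt ((1 - x^2) * Pp \<alpha> \<theta> x) = \<bar>sin y\<bar> * S"
    by (simp add: S_def x_def sqrtPcos_def real_sqrt_mult sin_squared_eq[symmetric])
  then have "\<bar>sin y\<bar> * Lintegrand \<alpha> \<theta> x = \<bar>sin y\<bar> * (N / (\<bar>sin y\<bar> * S * (\<alpha> + S)))"
    by (simp add: Lintegrand_def N_def C_def c_def S_def x_def sqrtPcos_def mult.assoc)
  also have "\<dots> = N / (S * (\<alpha> + S))"
    using \<open>\<bar>sin y\<bar> > 0\<close> by (simp add: mult.assoc)
  also have "\<dots> = - (C * (- C * x^2 / S) + \<alpha> * (- (C^2 * x^2 - c) / ((\<alpha> + S) * S)))"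
    using \<open>S > 0\<close> \<alpha>_pos
    by (simp add: N_def divide_simps add_pos_pos) (simp add: algebra_simps power2_eq_square)
  finally show ?thesis
    by (simp add: beta_density_def G_density_def S_def C_def c_def x_def)
qed

lemma density_increments_combination:
  "Cc \<alpha> \<theta> * integral {0..2*pi} (beta_density \<alpha> \<theta>) + \<alpha> * integral {0..2*pi} (G_density \<alpha> \<theta>)
     = - 2 * Lfun \<alpha> \<theta>"
proof -
  define K where "K y = - (Cc \<alpha> \<theta> * beta_density \<alpha> \<theta> y + \<alpha> * G_density \<alpha> \<theta> y)" for y
  have cont_b: "continuous_on {0..2*pi} (beta_density \<alpha> \<theta>)"
    using continuous_on_beta_density continuous_on_subset subset_UNIV by blast
  have cont_G: "continuous_on {0..2*pi} (G_density \<alpha> \<theta>)"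
    using continuous_on_G_density continuous_on_subset subset_UNIV by blast
  have "continuous_on {0..2*pi} K"
    unfolding K_def[abs_def] using cont_b cont_G by (intro continuous_intros)
  moreover have "K t = \<bar>sin t\<bar> * Lintegrand \<alpha> \<theta> (cos t)" if "sin t \<noteq> 0" for t
    unfolding K_def by (rule density_combination_eq_Lintegrand[OF that])
  ultimately have "(K has_integral 2 * Lfun \<alpha> \<theta>) {0..2*pi}"
    unfolding Lfun_eq_integral_Lintegrand by (rule has_integral_abs_sin_mult_cos)
  moreover have "(K has_integral - (Cc \<alpha> \<theta> * integral {0..2*pi} (beta_density \<alpha> \<theta>)
      + \<alpha> * integral {0..2*pi} (G_density \<alpha> \<theta>))) {0..2*pi}"
    unfolding K_def[abs_def]
    by (intro has_integral_neg has_integral_add has_integral_mult_right integrable_integral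
        integrable_continuous_real cont_b cont_G)
  ultimately show ?thesis
    by (metis has_integral_unique minus_mult_left verit_minus_simplify(4))
qed

lemma phase_shift_by_period:
  fixes \<phi> \<phi>' :: "real \<Rightarrow> real"
  assumes \<phi>: "\<And>u. (\<phi> has_real_derivative \<phi>' u) (at u)"
    and "\<And>u. (\<phi>' u)^2 = Pp \<alpha> \<theta> (cos (\<phi> u))" and "\<phi>' 0 \<le> 0"
  obtains T where "T > 0" and "\<And>u. \<phi> (u + T) = \<phi> u - 2*pi" and "\<And>u. \<phi>' (u + T) = \<phi>' u"
    and "\<And>u. \<phi>' u = - sqrtPcos \<alpha> \<theta> (\<phi> u)"
proof -
  have \<phi>': "\<phi>' u = - sqrtPcos \<alpha> \<theta> (\<phi> u)" for u
    unfolding sqrtPcos_def by (rule DERIV_neg_sqrt_of_square[OF \<phi> assms(2) Pp_cos_pos assms(3)])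
  have "(\<phi> has_real_derivative - sqrtPcos \<alpha> \<theta> (\<phi> u)) (at u)" for u
    using \<phi>[of u] by (simp only: \<phi>')
  then obtain T where "T > 0" and \<phi>_shift: "\<And>u. \<phi> (u + T) = \<phi> u - 2*pi"
    using autonomous_ODE_shift[OF _ continuous_on_sqrtPcos sqrtPcos_pos]
    by (metis sqrtPcos_periodic pi_gt_zero mult_pos_pos zero_less_numeral)
  moreover have "\<phi>' (u + T) = \<phi>' u" for u
    by (simp add: \<phi>' \<phi>_shift sqrtPcos_def cos_diff)
  ultimately show ?thesis
    using that \<phi>' by blast
qed

end

lemma Xmap_periodic:
  assumes "\<alpha> > 0"
    and \<phi>_shift: "\<And>u. \<phi> (u + T) = \<phi> u - 2*pi" and \<phi>'_shift: "\<And>u. \<phi>' (u + T) = \<phi>' u"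
    and \<beta>_shift: "\<And>u. \<beta> (u + T) = \<beta> u - B" and G_shift: "\<And>u. G (u + T) = G u - D"
    and balance: "Cc \<alpha> \<theta> * B + \<alpha> * D = 0"
  shows "Xmap \<alpha> \<theta> \<phi> \<phi>' \<beta> G (z + Complex T (B / \<alpha>)) = Xmap \<alpha> \<theta> \<phi> \<phi>' \<beta> G z"
proof -
  let ?u = "Re z" and ?v = "Im z"
  have A: "\<alpha> * (?v + B / \<alpha>) + \<beta> (?u + T) = \<alpha> * ?v + \<beta> ?u"
    using \<open>\<alpha> > 0\<close> \<beta>_shift[of ?u] by (simp add: distrib_left)
  have x2: "Cc \<alpha> \<theta> * (?v + B / \<alpha>) - G (?u + T) = Cc \<alpha> \<theta> * ?v - G ?u"
  proof -
    have "Cc \<alpha> \<theta> * (B / \<alpha>) = - D"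
      using \<open>\<alpha> > 0\<close> balance by (simp add: field_simps)
    then show ?thesis
      using G_shift[of ?u] by (simp add: distrib_left)
  qed
  have trig: "cos (\<phi> (?u + T)) = cos (\<phi> ?u)" "sin (\<phi> (?u + T)) = sin (\<phi> ?u)"
    by (simp_all add: \<phi>_shift cos_diff sin_diff)
  have Gp: "Gprime \<alpha> \<theta> \<phi> \<phi>' (?u + T) = Gprime \<alpha> \<theta> \<phi> \<phi>' ?u"
    by (simp add: Gprime_def trig \<phi>'_shift)
  have shift: "Re (z + Complex T (B / \<alpha>)) = ?u + T" "Im (z + Complex T (B / \<alpha>)) = ?v + B / \<alpha>"
    by simp_all
  show ?thesis
    unfolding Xmap_def Let_def shift A x2 trig Gp by (rule refl)
qed

theorem proposition5p2:
  fixes \<alpha> \<theta> :: real and \<phi> \<phi>' \<beta> G :: "real \<Rightarrow> real"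
  assumes "\<alpha> > 0"
    and "0 < \<theta>" and "\<theta> < theta_plus \<alpha>" and "\<theta> < pi / 4"
    and "Lfun \<alpha> \<theta> = 0"
    and "\<And>u. (\<phi> has_real_derivative \<phi>' u) (at u)"
    and "\<And>u. (\<phi>' u)^2 = Pp \<alpha> \<theta> (cos (\<phi> u))"
    and "\<phi> 0 = 0" and "\<phi>' 0 \<le> 0"
    and "\<And>u. (\<beta> has_real_derivative Cc \<alpha> \<theta> * (cos (\<phi> u))^2) (at u)"
    and "\<beta> 0 = 0"
    and "\<And>u. (G has_real_derivative Gprime \<alpha> \<theta> \<phi> \<phi>' u) (at u)"
    and "G 0 = 0"
  shows "\<exists>Z::complex. Z \<noteq> 0 \<and> (\<forall>z. Xmap \<alpha> \<theta> \<phi> \<phi>' \<beta> G (z + Z) = Xmap \<alpha> \<theta> \<phi> \<phi>' \<beta> G z)"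
proof -
  have P: "Pp \<alpha> \<theta> (cos y) > 0" for y
    using Pp_pos[OF assms(1-4)] abs_cos_le_one by blast
  note \<alpha>_pos = \<open>\<alpha> > 0\<close> and \<phi> = \<open>\<And>u. (\<phi> has_real_derivative \<phi>' u) (at u)\<close>
  obtain T where "T > 0" and \<phi>_shift: "\<And>u. \<phi> (u + T) = \<phi> u - 2*pi"
    and \<phi>'_shift: "\<And>u. \<phi>' (u + T) = \<phi>' u" and \<phi>': "\<And>u. \<phi>' u = - sqrtPcos \<alpha> \<theta> (\<phi> u)"
    using phase_shift_by_period[OF \<alpha>_pos P \<phi> assms(7,9)] by blast
  have "(\<beta> has_real_derivative beta_density \<alpha> \<theta> (\<phi> u) * \<phi>' u) (at u)" for u
    using assms(10)[of u] by (simp only: \<phi>' beta_density_mult_neg_sqrtPcos[OF \<alpha>_pos P])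
  then have \<beta>_shift: "\<beta> (u + T) = \<beta> u - integral {0..2*pi} (beta_density \<alpha> \<theta>)" for u
    using DERIV_comp_periodic_increment[OF \<phi> \<phi>_shift _ continuous_on_beta_density[OF \<alpha>_pos P]
        beta_density_periodic] by simp
  have "(G has_real_derivative G_density \<alpha> \<theta> (\<phi> u) * \<phi>' u) (at u)" for u
    using assms(12)[of u]
    by (simp only: Gprime_def \<phi>' diff_minus_eq_add G_density_mult_neg_sqrtPcos[OF \<alpha>_pos P])
  then have G_shift: "G (u + T) = G u - integral {0..2*pi} (G_density \<alpha> \<theta>)" for u
    using DERIV_comp_periodic_increment[OF \<phi> \<phi>_shift _ continuous_on_G_density[OF \<alpha>_pos P]
        G_density_periodic] by simp
  have "Cc \<alpha> \<theta> * integral {0..2*pi} (beta_density \<alpha> \<theta>) + \<alpha> * integral {0..2*pi} (G_density \<alpha> \<theta>) = 0"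
    using density_increments_combination[OF \<alpha>_pos P] \<open>Lfun \<alpha> \<theta> = 0\<close> by simp
  from Xmap_periodic[where \<phi>=\<phi> and \<phi>'=\<phi>' and \<beta>=\<beta> and G=G, OF \<alpha>_pos \<phi>_shift \<phi>'_shift \<beta>_shift G_shift this]
  show ?thesis
    using \<open>T > 0\<close> by (metis Complex_eq_0 less_irrefl)
qed

end
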